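(* Let $x\in\mathbb{R}^n_{++}$ and $y\in\mathbb{R}^n_+$ with $D_h(x,y)<\infty$. Then $$y_{\min}\ge -x_{\min}\,W_0\!\left(-\exp\!\left(-1-\frac{D_h(x,y)}{x_{\min}}\right)\right),$$ where $x_{\min}=\min_i x_i$ and $y_{\min}=\min_i y_i$.
   Context: $D_h(x,y)=\sum_i\big(x_i\log\frac{x_i}{y_i}-x_i+y_i\big)$ (Bregman divergence of $h(x)=\sum_i x_i(\log x_i-1)$), which is $+\infty$ if some $y_i=0$. $W_0$ is the principal branch of the Lambert $W$ function. *)

theory Defs
  imports "HOL-Analysis.Analysis"
begin

text \<open>Principal branch W_0 of the Lambert W function on [-1/e, \<infinity>):
  the unique w \<ge> -1 with w * exp w = z.\<close>
definition lambert_W0 :: "real \<Rightarrow> real" where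
  "lambert_W0 z = (THE w. w \<ge> -1 \<and> w * exp w = z)"

text \<open>Bregman divergence of h(x) = sum_i x_i (log x_i - 1); +\<infinity> if some y_i = 0.\<close>
definition bregman_ent :: "real ^ 'n \<Rightarrow> real ^ 'n \<Rightarrow> ereal" where
  "bregman_ent x y =
     (if \<exists>i. y $ i = 0 then \<infinity>
      else ereal (\<Sum>i\<in>UNIV. x $ i * ln (x $ i / y $ i) - x $ i + y $ i))"

definition vmin :: "real ^ 'n \<Rightarrow> real" where
  "vmin x = Min (range (\<lambda>i. x $ i))"

end

(* Write a = x_min and let y_min = y_j. Every summand of D_h(x, y) is nonnegative, so
   D_h(x, y) \<ge> x_j ln (x_j / y_j) - x_j + y_j \<ge> a ln (a / y_j) - a + y_j, the last step because
   c \<mapsto> c ln (c / b) - c + b increases for c \<ge> b. With s = y_j / a \<le> 1 (otherwise W_0 \<ge> -1 suffices) this reads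
   s - ln s \<le> 1 + D_h / a, i.e. (-s) e^(-s) \<le> -exp (-1 - D_h / a) = W e^W for W = W_0 of that
   argument; as w e^w increases on [-1, \<infinity>), -s \<le> W. *)

theory Submission
  imports Defs
begin

lemma strict_mono_on_mult_exp: "strict_mono_on {-1..} (\<lambda>w::real. w * exp w)"
proof (rule strict_mono_onI)
  fix v w :: real
  assume "v \<in> {-1..}" "v < w"
  show "v * exp v < w * exp w"
  proof (rule DERIV_pos_imp_increasing_open[OF \<open>v < w\<close>])
    fix t assume "v < t"
    then have "0 < (1 + t) * exp t"
      using \<open>v \<in> {-1..}\<close> by simp
    moreover have "DERIV (\<lambda>w. w * exp w) t :> (1 + t) * exp t"
      by (auto intro!: derivative_eq_intros simp: algebra_simps)
    ultimately show "\<exists>d. DERIV (\<lambda>w. w * exp w) t :> d \<and> 0 < d"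
      by blast
  qed (intro continuous_intros)
qed

lemma mult_exp_le_iff:
  fixes v w :: real
  assumes "-1 \<le> v" "-1 \<le> w"
  shows "v * exp v \<le> w * exp w \<longleftrightarrow> v \<le> w"
  using strict_mono_on_less_eq[OF strict_mono_on_mult_exp] assms by simp

lemma lambert_W0:
  fixes z :: real
  assumes "- exp (-1) \<le> z"
  shows "-1 \<le> lambert_W0 z" and "lambert_W0 z * exp (lambert_W0 z) = z"
proof -
  have "\<bar>z\<bar> \<le> \<bar>z\<bar> * exp \<bar>z\<bar>"
    by (simp add: mult_le_cancel_left1)
  then obtain w where w: "-1 \<le> w" "w * exp w = z"
    using IVT'[of "\<lambda>w. w * exp w" "-1" z "\<bar>z\<bar>"] assms
    by (force intro: continuous_intros)
  have "lambert_W0 z = w"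
    unfolding lambert_W0_def
  proof (rule the_equality)
    fix v assume "-1 \<le> v \<and> v * exp v = z"
    then show "v = w"
      using strict_mono_on_eqD[OF strict_mono_on_mult_exp, of w v] w by simp
  qed (use w in simp)
  with w show "-1 \<le> lambert_W0 z" "lambert_W0 z * exp (lambert_W0 z) = z"
    by simp_all
qed

lemma neg_lambert_W0_le:
  fixes s t :: real
  assumes "0 < s" "s \<le> 1" and "s - ln s \<le> 1 + t"
  shows "- lambert_W0 (- exp (-1 - t)) \<le> s"
proof -
  define w where "w = lambert_W0 (- exp (-1 - t))"
  have "0 \<le> t"
    using ln_le_minus_one[OF \<open>0 < s\<close>] assms(3) by linarith
  then have w: "-1 \<le> w" "w * exp w = - exp (-1 - t)"
    using lambert_W0[of "- exp (-1 - t)"] unfolding w_def by simp_all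
  have "(-s) * exp (-s) = - exp (ln s - s)"
    using \<open>0 < s\<close> by (simp add: exp_diff exp_minus field_simps)
  also have "\<dots> \<le> w * exp w"
    using assms(3) w(2) by simp
  finally have "-s \<le> w"
    using mult_exp_le_iff[of "-s" w] assms(2) w(1) by simp
  then show ?thesis
    unfolding w_def by simp
qed

definition scalar_bregman_ent :: "real \<Rightarrow> real \<Rightarrow> real" where
  "scalar_bregman_ent c b = c * ln (c / b) - c + b"

lemma scalar_bregman_ent_nonneg:
  assumes "0 < c" "0 < b"
  shows "0 \<le> scalar_bregman_ent c b"
proof -
  have "c * (1 - b / c) \<le> c * ln (c / b)"
    using ln_le_minus_one[of "b / c"] assms by (simp add: ln_div)
  moreover have "c * (1 - b / c) = c - b"
    using assms by (simp add: field_simps)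
  ultimately show ?thesis
    by (simp add: scalar_bregman_ent_def)
qed

text \<open>\<open>D(c, b) - D(a, b) = D(c, a) + (c - a) ln (a / b)\<close>.\<close>
lemma scalar_bregman_ent_mono:
  assumes "0 < b" "b \<le> a" "a \<le> c"
  shows "scalar_bregman_ent a b \<le> scalar_bregman_ent c b"
proof -
  have "0 < a" "0 < c"
    using assms by linarith+
  then have "scalar_bregman_ent c b - scalar_bregman_ent a b
      = scalar_bregman_ent c a + (c - a) * ln (a / b)"
    using \<open>0 < b\<close> by (simp add: scalar_bregman_ent_def ln_div algebra_simps)
  moreover have "0 \<le> (c - a) * ln (a / b)"
    using assms by simp
  ultimately show ?thesis
    using scalar_bregman_ent_nonneg[OF \<open>0 < c\<close> \<open>0 < a\<close>] by linarith
qed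

lemma bregman_ent_finite:
  fixes x y :: "real ^ 'n"
  assumes "bregman_ent x y < \<infinity>"
  shows "\<And>i. y $ i \<noteq> 0"
    and "bregman_ent x y = ereal (\<Sum>i\<in>UNIV. scalar_bregman_ent (x $ i) (y $ i))"
  using assms by (auto simp: bregman_ent_def scalar_bregman_ent_def split: if_splits)

lemma vmin_le: "vmin x \<le> x $ i"
  unfolding vmin_def by (rule Min_le) auto

lemma vmin_attained: obtains i where "vmin x = x $ i"
proof -
  have "vmin x \<in> range (\<lambda>i. x $ i)"
    unfolding vmin_def by (rule Min_in) auto
  with that show thesis by blast
qed

lemma neg_lambert_W0_le_scalar_bregman_ent:
  assumes "0 < a" "0 < b" "a \<le> c" and "scalar_bregman_ent c b \<le> D"
  shows "- a * lambert_W0 (- exp (-1 - D / a)) \<le> b"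
proof -
  have "0 \<le> D"
    using scalar_bregman_ent_nonneg[of c b] assms by linarith
  have "- lambert_W0 (- exp (-1 - D / a)) \<le> b / a"
  proof (cases "b \<le> a")
    case True
    have "a * (b / a - ln (b / a) - 1) = scalar_bregman_ent a b"
      using assms(1,2) by (simp add: scalar_bregman_ent_def ln_div algebra_simps)
    also have "\<dots> \<le> D"
      using scalar_bregman_ent_mono[OF assms(2) True assms(3)] assms(4) by linarith
    finally have "b / a - ln (b / a) \<le> 1 + D / a"
      using assms(1) by (simp add: field_simps)
    then show ?thesis
      using neg_lambert_W0_le assms(1,2) True by simp
  next
    case False
    then have "1 < b / a"
      using assms(1) by simp
    moreover have "-1 \<le> lambert_W0 (- exp (-1 - D / a))"
      using lambert_W0(1) assms(1) \<open>0 \<le> D\<close> by simp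
    ultimately show ?thesis
      by linarith
  qed
  then show ?thesis
    using assms(1) by (simp add: field_simps)
qed

theorem lemmaB3:
  fixes x y :: "real ^ 'n"
  assumes "\<forall>i. x $ i > 0"
    and "\<forall>i. y $ i \<ge> 0"
    and "bregman_ent x y < \<infinity>"
  shows "vmin y \<ge> - vmin x *
           lambert_W0 (- exp (-1 - real_of_ereal (bregman_ent x y) / vmin x))"
proof -
  define D where "D = (\<Sum>i\<in>UNIV. scalar_bregman_ent (x $ i) (y $ i))"
  obtain j where j: "vmin y = y $ j"
    using vmin_attained by blast
  have y_pos: "0 < y $ i" for i
    using assms(2) bregman_ent_finite(1)[OF assms(3)] by (metis less_eq_real_def)
  have "scalar_bregman_ent (x $ j) (y $ j) \<le> D"
    unfolding D_def
    by (rule member_le_sum) (use assms(1) y_pos scalar_bregman_ent_nonneg in auto)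
  moreover have "0 < vmin x"
    using assms(1) vmin_attained by metis
  ultimately have "- vmin x * lambert_W0 (- exp (-1 - D / vmin x)) \<le> vmin y"
    using neg_lambert_W0_le_scalar_bregman_ent[of "vmin x" "y $ j" "x $ j" D] y_pos j vmin_le[of x j]
    by simp
  then show ?thesis
    using bregman_ent_finite(2)[OF assms(3)] unfolding D_def by simp
qed

end
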